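(* Let $f$ and $g$ be completely multiplicative functions with $|f(n)|,|g(n)|\le1$ for all $n$, where $S_f(x)=x^\alpha\xi(x)$ for some $\xi$ with $\xi(t)\ll_\epsilon t^\epsilon$ for every $\epsilon>0$, and where $\mathbb{D}_\beta(f,g)<\infty$ for some $0<\beta<2\alpha-1$. Let $h$ be defined by $g=f*h$. Then the Dirichlet series $L(s,h)=\sum_{n\ge1}h(n)n^{-s}$ is non-zero in the region $\Re(s)>(1+\beta)/2$.
   Context: $S_f(x):=\sum_{n\le x}f(n)$; $(f*h)(n)=\sum_{dm=n}f(d)h(m)$; $\mathbb{D}_\beta(f,g)^2:=\sum_p \frac{1-\Re(f(p)\overline{g(p)})}{p^\beta}$ (sum over primes). *)

theory Defs
  imports "HOL-Analysis.Analysis"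
begin

definition completely_multiplicative :: "(nat \<Rightarrow> complex) \<Rightarrow> bool" where
  "completely_multiplicative f \<longleftrightarrow>
     f 1 = 1 \<and> (\<forall>m n. m > 0 \<longrightarrow> n > 0 \<longrightarrow> f (m * n) = f m * f n)"

definition summatory :: "(nat \<Rightarrow> complex) \<Rightarrow> real \<Rightarrow> complex" where
  "summatory f x = (\<Sum>n\<in>{1..nat \<lfloor>x\<rfloor>}. f n)"

definition dconv :: "(nat \<Rightarrow> complex) \<Rightarrow> (nat \<Rightarrow> complex) \<Rightarrow> nat \<Rightarrow> complex" where
  "dconv f h n = (\<Sum>d | d dvd n. f d * h (n div d))"

text \<open>Summand of the pretentious distance D_beta(f,g)^2.\<close>
definition dist_term :: "real \<Rightarrow> (nat \<Rightarrow> complex) \<Rightarrow> (nat \<Rightarrow> complex) \<Rightarrow> nat \<Rightarrow> real" where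
  "dist_term \<beta> f g p = (1 - Re (f p * cnj (g p))) / real p powr \<beta>"

end

theory Submission
  imports Defs "HOL-Computational_Algebra.Primes" "HOL-Computational_Algebra.Formal_Power_Series"
begin

text \<open>As f and g are completely multiplicative, g = f * h forces h to be the multiplicative
function with Euler factors (1 - f(p) p^-s) / (1 - g(p) p^-s), i.e.
h(p^k) = (g(p) - f(p)) g(p)^(k-1); exchanging f and g gives its Dirichlet inverse. From
|g(p) - f(p)|^2 <= 2 (1 - Re f(p) conj g(p)) and AM-GM,
|g(p) - f(p)| p^-sigma <= (1 - Re f(p) conj g(p)) p^-beta + p^(beta - 2 sigma),
which is summable over primes for sigma > (1 + beta)/2. Bounding partial sums by the Euler
product then shows that both Dirichlet series converge absolutely there, and their product is 1,
so L(s, h) is nonzero.\<close>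

definition multiplicative :: "(nat \<Rightarrow> 'a::comm_monoid_mult) \<Rightarrow> bool" where
  "multiplicative F \<longleftrightarrow>
     F 1 = 1 \<and> (\<forall>m n. coprime m n \<longrightarrow> m > 0 \<longrightarrow> n > 0 \<longrightarrow> F (m * n) = F m * F n)"

lemma completely_multiplicative_imp_multiplicative:
  "completely_multiplicative f \<Longrightarrow> multiplicative f"
  by (simp add: completely_multiplicative_def multiplicative_def)

lemma completely_multiplicative_power:
  assumes "completely_multiplicative f" "p > 0"
  shows "f (p ^ k) = f p ^ k"
  using assms by (induction k) (auto simp: completely_multiplicative_def)

lemma multiplicative_prod_prime_powers:
  assumes F: "multiplicative F" and P: "finite P" "\<And>p. p \<in> P \<Longrightarrow> prime p"
  shows "F (\<Prod>p\<in>P. p ^ e p) = (\<Prod>p\<in>P. F (p ^ e p))"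
  using P
proof (induction P rule: finite_induct)
  case empty
  then show ?case using F by (simp add: multiplicative_def)
next
  case (insert q P)
  have "coprime (q ^ e q) (\<Prod>p\<in>P. p ^ e p)"
  proof (rule prod_coprime_right)
    fix p assume "p \<in> P"
    then have "coprime q p" using insert by (metis insertCI primes_coprime)
    then show "coprime (q ^ e q) (p ^ e p)" by simp
  qed
  moreover have "q ^ e q > 0" "(\<Prod>p\<in>P. p ^ e p) > 0"
    using insert by (auto intro!: prod_pos simp: prime_gt_0_nat)
  ultimately show ?case using insert F by (simp add: multiplicative_def)
qed

lemma multiplicative_eqI:
  assumes F: "multiplicative F" and G: "multiplicative G"
    and eq: "\<And>p k. prime p \<Longrightarrow> F (p ^ k) = G (p ^ k)" and n: "n > 0"
  shows "F n = G n"
proof -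
  have "F n = F (\<Prod>p\<in>prime_factors n. p ^ multiplicity p n)"
    using prime_factorization_nat[OF n] by simp
  also have "\<dots> = (\<Prod>p\<in>prime_factors n. G (p ^ multiplicity p n))"
    by (subst multiplicative_prod_prime_powers[OF F]) (auto intro!: prod.cong eq)
  also have "\<dots> = G (\<Prod>p\<in>prime_factors n. p ^ multiplicity p n)"
    by (subst multiplicative_prod_prime_powers[OF G]) auto
  also have "\<dots> = G n"
    using prime_factorization_nat[OF n] by simp
  finally show ?thesis .
qed

lemma multiplicative_prod_prime_factors:
  "multiplicative (\<lambda>n. \<Prod>p\<in>prime_factors n. \<phi> p (multiplicity p n))"
  unfolding multiplicative_def
proof (intro conjI allI impI)
  fix m n :: nat assume cop: "coprime m n" and m: "m > 0" and n: "n > 0"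
  have disj: "prime_factors m \<inter> prime_factors n = {}"
    using cop by (auto simp: in_prime_factors_iff dest: coprime_common_divisor simp: not_prime_unit)
  have "multiplicity p (m * n) = multiplicity p m" if "p \<in> prime_factors m" for p
    using that disj m n
    by (auto simp: prime_elem_multiplicity_mult_distrib in_prime_factors_iff
             intro!: not_dvd_imp_multiplicity_0)
  moreover have "multiplicity p (m * n) = multiplicity p n" if "p \<in> prime_factors n" for p
    using that disj m n
    by (auto simp: prime_elem_multiplicity_mult_distrib in_prime_factors_iff
             intro!: not_dvd_imp_multiplicity_0)
  ultimately show "(\<Prod>p\<in>prime_factors (m * n). \<phi> p (multiplicity p (m * n))) =
      (\<Prod>p\<in>prime_factors m. \<phi> p (multiplicity p m)) * (\<Prod>p\<in>prime_factors n. \<phi> p (multiplicity p n))"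
    using m n disj by (simp add: prime_factors_product prod.union_disjoint cong: prod.cong)
qed simp

lemma dconv_prime_power:
  assumes p: "prime p"
  shows "dconv F G (p ^ k) = (\<Sum>i\<le>k. F (p ^ i) * G (p ^ (k - i)))"
proof -
  have p1: "p > 1" using p prime_gt_1_nat by blast
  have divisors: "{d. d dvd p ^ k} = (\<lambda>i. p ^ i) ` {..k}"
    using divides_primepow_nat[OF p] by auto
  have "inj_on (\<lambda>i. p ^ i) {..k}"
    using p1 by (simp add: inj_on_def power_inject_exp)
  then have "dconv F G (p ^ k) = (\<Sum>i\<le>k. F (p ^ i) * G (p ^ k div p ^ i))"
    unfolding dconv_def divisors by (simp add: sum.reindex)
  also have "\<dots> = (\<Sum>i\<le>k. F (p ^ i) * G (p ^ (k - i)))"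
    using p1 by (intro sum.cong refl) (simp add: power_diff)
  finally show ?thesis .
qed

lemma multiplicative_dconv:
  assumes F: "multiplicative F" and G: "multiplicative G"
  shows "multiplicative (dconv F G)"
  unfolding multiplicative_def
proof (intro conjI allI impI)
  show "dconv F G 1 = 1" using F G by (simp add: dconv_def multiplicative_def)
next
  fix m n :: nat assume cop: "coprime m n" and m: "m > 0" and n: "n > 0"
  define D where "D x = {d. d dvd x}" for x :: nat
  have divisors: "D (m * n) = (\<lambda>(a, b). a * b) ` (D m \<times> D n)"
  proof
    show "D (m * n) \<subseteq> (\<lambda>(a, b). a * b) ` (D m \<times> D n)"
      by (auto simp: D_def elim!: dvd_productE)
    show "(\<lambda>(a, b). a * b) ` (D m \<times> D n) \<subseteq> D (m * n)"
      by (auto simp: D_def mult_dvd_mono)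
  qed
  have "inj_on (\<lambda>(a, b). a * b) (D m \<times> D n)"
  proof (rule inj_onI, clarsimp simp: D_def)
    fix a b a' b' assume "a dvd m" "b dvd n" "a' dvd m" "b' dvd n" and eq: "a * b = a' * b'"
    then have "coprime a b'" "coprime a' b" using cop by (meson coprime_divisors)+
    then have "a dvd a'" "a' dvd a" using eq
      by (metis coprime_dvd_mult_left_iff dvd_triv_left)+
    then have "a = a'" by (rule dvd_antisym)
    moreover have "a \<noteq> 0" using \<open>a dvd m\<close> m by auto
    ultimately show "a = a' \<and> b = b'" using eq by auto
  qed
  then have "dconv F G (m * n) = (\<Sum>(a, b)\<in>D m \<times> D n. F (a * b) * G ((m * n) div (a * b)))"
    unfolding dconv_def D_def[symmetric] divisors by (simp add: sum.reindex case_prod_unfold)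
  also have "\<dots> = (\<Sum>(a, b)\<in>D m \<times> D n. (F a * G (m div a)) * (F b * G (n div b)))"
  proof (intro sum.cong refl, clarsimp simp: D_def)
    fix a b assume a: "a dvd m" and b: "b dvd n"
    have "coprime a b" using cop a b by (metis coprime_divisors)
    moreover have "coprime (m div a) (n div b)" using cop a b by fastforce
    moreover have "a > 0" "b > 0" "m div a > 0" "n div b > 0"
      using a b m n by (auto elim!: dvdE)
    moreover have "(m * n) div (a * b) = (m div a) * (n div b)"
      using a b by (simp add: div_mult_div_if_dvd)
    ultimately show "F (a * b) * G (m * n div (a * b)) = F a * G (m div a) * (F b * G (n div b))"
      using F G by (simp add: multiplicative_def)
  qed
  also have "\<dots> = dconv F G m * dconv F G n"
    by (simp add: dconv_def D_def sum_product sum.cartesian_product case_prod_unfold)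
  finally show "dconv F G (m * n) = dconv F G m * dconv F G n" .
qed

lemma dconv_left_cancel:
  assumes F1: "F 1 = 1" and eq: "\<And>n. n > 0 \<Longrightarrow> dconv F X n = dconv F Y n" and n: "n > 0"
  shows "X n = Y n"
  using n
proof (induction n rule: less_induct)
  case (less n)
  define D where "D = {d. d dvd n} - {1}"
  have split: "dconv F Z n = Z n + (\<Sum>d\<in>D. F d * Z (n div d))" for Z
    using less.prems F1 unfolding dconv_def D_def
    by (subst sum.remove[of _ 1]) (simp_all add: finite_divisors_nat)
  have "(\<Sum>d\<in>D. F d * X (n div d)) = (\<Sum>d\<in>D. F d * Y (n div d))"
  proof (rule sum.cong)
    fix d assume "d \<in> D"
    have d: "d dvd n" "d \<noteq> 1" using \<open>d \<in> D\<close> by (auto simp: D_def)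
    then have "d > 1"
      using less.prems by (metis dvd_0_left_iff gr0_implies_Suc less_one linorder_neqE_nat neq0_conv)
    moreover have "n div d > 0" using less.prems d by (auto elim!: dvdE)
    ultimately have "n div d < n" "n div d > 0" using less.prems by (auto intro: div_less_dividend)
    then show "F d * X (n div d) = F d * Y (n div d)" using less.IH by simp
  qed simp
  then show ?case using eq[OF less.prems] split[of X] split[of Y] by simp
qed

definition ratio_coeff :: "'a::comm_ring_1 \<Rightarrow> 'a \<Rightarrow> nat \<Rightarrow> 'a" where
  "ratio_coeff x y k = (if k = 0 then 1 else (y - x) * y ^ (k - 1))"

lemma fps_ratio_coeff:
  "(1 - fps_const y * fps_X) * Abs_fps (ratio_coeff x y) = 1 - fps_const x * fps_X"
proof (rule fps_ext)
  fix n
  show "fps_nth ((1 - fps_const y * fps_X) * Abs_fps (ratio_coeff x y)) n =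
        fps_nth (1 - fps_const x * fps_X) n"
  proof (cases n)
    case 0
    then show ?thesis by (simp add: ratio_coeff_def fps_mult_nth_0)
  next
    case (Suc m)
    then have "fps_nth ((1 - fps_const y * fps_X) * Abs_fps (ratio_coeff x y)) n =
          ratio_coeff x y n - y * ratio_coeff x y m"
      by (simp add: algebra_simps mult.assoc fps_X_mult_nth)
    then show ?thesis using Suc
      by (cases m) (auto simp: ratio_coeff_def algebra_simps fps_X_mult_nth)
  qed
qed

lemma ratio_coeff_conv_power: "(\<Sum>i\<le>k. x ^ i * ratio_coeff x y (k - i)) = y ^ k"
proof (induction k)
  case 0
  then show ?case by (simp add: ratio_coeff_def)
next
  case (Suc k)
  have "(\<Sum>i\<le>Suc k. x ^ i * ratio_coeff x y (Suc k - i)) =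
        ratio_coeff x y (Suc k) + (\<Sum>i\<le>k. x ^ Suc i * ratio_coeff x y (Suc k - Suc i))"
    by (subst sum.atMost_Suc_shift) simp
  also have "\<dots> = ratio_coeff x y (Suc k) + x * (\<Sum>i\<le>k. x ^ i * ratio_coeff x y (k - i))"
    by (simp add: sum_distrib_left mult.assoc)
  finally show ?case using Suc by (simp add: ratio_coeff_def algebra_simps)
qed

lemma ratio_coeff_conv_swap:
  fixes x y :: "'a::field"
  shows "(\<Sum>i\<le>k. ratio_coeff x y i * ratio_coeff y x (k - i)) = (if k = 0 then 1 else 0)"
proof -
  define X Y :: "'a fps" where "X = 1 - fps_const x * fps_X" and "Y = 1 - fps_const y * fps_X"
  define A B where "A = Abs_fps (ratio_coeff x y)" and "B = Abs_fps (ratio_coeff y x)"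
  have "fps_nth X 0 = 1" "fps_nth Y 0 = 1" by (simp_all add: X_def Y_def)
  then have "X * Y \<noteq> 0" by auto
  moreover have "(X * Y) * (A * B) = (X * Y) * 1"
  proof -
    have "Y * A = X" "X * B = Y" by (simp_all only: X_def Y_def A_def B_def fps_ratio_coeff)
    moreover have "(X * Y) * (A * B) = (Y * A) * (X * B)" by (simp only: ac_simps)
    ultimately show ?thesis by simp
  qed
  ultimately have "A * B = 1" by (rule mult_left_cancel[THEN iffD1])
  then have "fps_nth (A * B) k = fps_nth 1 k" by simp
  then show ?thesis by (simp add: A_def B_def fps_mult_nth atLeast0AtMost)
qed

definition ratio_mult :: "(nat \<Rightarrow> 'a::comm_ring_1) \<Rightarrow> (nat \<Rightarrow> 'a) \<Rightarrow> nat \<Rightarrow> 'a" where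
  "ratio_mult x y n = (\<Prod>p\<in>prime_factors n. ratio_coeff (x p) (y p) (multiplicity p n))"

lemma multiplicative_ratio_mult: "multiplicative (ratio_mult x y)"
  unfolding ratio_mult_def by (rule multiplicative_prod_prime_factors)

lemma ratio_mult_prime_power:
  assumes "prime p"
  shows "ratio_mult x y (p ^ k) = ratio_coeff (x p) (y p) k"
  using assms
  by (cases "k = 0") (auto simp: ratio_mult_def ratio_coeff_def prime_factorization_prime_power
                                 multiplicity_prime_power)

lemma dconv_ratio_mult:
  assumes f: "completely_multiplicative f" and g: "completely_multiplicative g" and n: "n > 0"
  shows "dconv f (ratio_mult f g) n = g n"
proof (rule multiplicative_eqI[OF _ _ _ n])
  show "multiplicative (dconv f (ratio_mult f g))"
    by (intro multiplicative_dconv completely_multiplicative_imp_multiplicative f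
              multiplicative_ratio_mult)
  show "multiplicative g" by (rule completely_multiplicative_imp_multiplicative[OF g])
  fix p k :: nat assume p: "prime p"
  then have "p > 0" by (simp add: prime_gt_0_nat)
  with p show "dconv f (ratio_mult f g) (p ^ k) = g (p ^ k)"
    by (simp add: dconv_prime_power ratio_mult_prime_power completely_multiplicative_power f g
                  ratio_coeff_conv_power)
qed

lemma dconv_ratio_mult_swap:
  fixes x y :: "nat \<Rightarrow> complex"
  assumes n: "n > 0"
  shows "dconv (ratio_mult x y) (ratio_mult y x) n = (if n = 1 then 1 else 0)"
proof (rule multiplicative_eqI[OF _ _ _ n])
  show "multiplicative (dconv (ratio_mult x y) (ratio_mult y x))"
    by (intro multiplicative_dconv multiplicative_ratio_mult)
  show "multiplicative (\<lambda>n. if n = 1 then 1 else 0 :: complex)"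
    by (auto simp: multiplicative_def)
  fix p k :: nat assume p: "prime p"
  then have "p ^ k = 1 \<longleftrightarrow> k = 0" using prime_gt_1_nat[OF p] by auto
  with p show "dconv (ratio_mult x y) (ratio_mult y x) (p ^ k) = (if p ^ k = 1 then 1 else 0)"
    by (simp add: dconv_prime_power ratio_mult_prime_power ratio_coeff_conv_swap)
qed

lemma prime_power_part_decompose:
  fixes n q :: nat
  assumes q: "prime q" and n: "n > 0"
  defines "r \<equiv> n div q ^ multiplicity q n"
  shows "n = q ^ multiplicity q n * r" and "r > 0" and "coprime (q ^ multiplicity q n) r"
    and "prime_factors r = prime_factors n - {q}"
proof -
  show dec: "n = q ^ multiplicity q n * r"
    unfolding r_def by (simp add: multiplicity_dvd)
  then show r_pos: "r > 0" using n by (metis gr0I mult_0_right)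
  have "\<not> q dvd r"
    unfolding r_def using n q by (intro multiplicity_decompose) (auto dest: not_prime_unit)
  then show "coprime (q ^ multiplicity q n) r" using q by (simp add: prime_imp_coprime)
  have "prime_factors n = prime_factors (q ^ multiplicity q n) \<union> prime_factors r"
    using dec r_pos q by (metis prime_factors_product power_not_zero not_prime_0 gr_implies_not0)
  moreover have "prime_factors (q ^ multiplicity q n) \<subseteq> {q}"
    using q by (auto simp: prime_factorization_prime_power)
  moreover have "q \<notin> prime_factors r" using \<open>\<not> q dvd r\<close> by auto
  ultimately show "prime_factors r = prime_factors n - {q}" by blast
qed

lemma multiplicative_sum_le_prod:
  fixes A B :: "nat \<Rightarrow> real"
  assumes A: "multiplicative A" "\<And>n. A n \<ge> 0"
    and Q: "finite Q" "\<And>q. q \<in> Q \<Longrightarrow> prime q"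
    and local_sum: "\<And>p K. p \<in> Q \<Longrightarrow> (\<Sum>k\<le>K. A (p ^ k)) \<le> B p"
    and X: "finite X" "\<And>n. n \<in> X \<Longrightarrow> n > 0 \<and> prime_factors n \<subseteq> Q"
  shows "sum A X \<le> prod B Q"
  using Q local_sum X
proof (induction Q arbitrary: X rule: finite_induct)
  case empty
  then have "X \<subseteq> {1}" by (auto simp: prime_factorization_empty_iff)
  then have "sum A X \<le> sum A {1}" by (intro sum_mono2) (auto simp: A)
  then show ?case using A by (simp add: multiplicative_def)
next
  case (insert q Q)
  have q: "prime q" using insert.prems by simp
  define v where "v n = multiplicity q n" for n
  define r where "r n = n div q ^ v n" for n
  have dec: "n = q ^ v n * r n" and r: "r n > 0" "prime_factors (r n) \<subseteq> Q"
    and A_dec: "A n = A (q ^ v n) * A (r n)" if "n \<in> X" for n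
  proof -
    have n: "n > 0" using that insert.prems by simp
    have parts: "n = q ^ v n * r n" "r n > 0" "coprime (q ^ v n) (r n)"
      "prime_factors (r n) = prime_factors n - {q}"
      using prime_power_part_decompose[OF q n] by (simp_all add: v_def r_def)
    show "n = q ^ v n * r n" "r n > 0" by (fact parts)+
    show "prime_factors (r n) \<subseteq> Q" using parts(4) that insert.prems by blast
    show "A n = A (q ^ v n) * A (r n)"
      using A(1) parts q by (metis multiplicative_def prime_gt_0_nat zero_less_power)
  qed
  text \<open>Splitting off the q-part embeds X into {..K} \<times> r ` X, so the sum over X is bounded by
    the local sum at q times a sum over numbers whose prime factors lie in Q.\<close>
  have inj: "inj_on (\<lambda>n. (v n, r n)) X"
    by (rule inj_onI) (metis dec prod.inject)
  define K where "K = Max (v ` X)"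
  have "sum A X = (\<Sum>n\<in>X. A (q ^ v n) * A (r n))" by (rule sum.cong) (auto simp: A_dec)
  also have "\<dots> = (\<Sum>(k, m)\<in>(\<lambda>n. (v n, r n)) ` X. A (q ^ k) * A m)"
    by (simp add: sum.reindex[OF inj])
  also have "\<dots> \<le> (\<Sum>(k, m)\<in>{..K} \<times> r ` X. A (q ^ k) * A m)"
    using insert.prems by (intro sum_mono2) (auto simp: K_def A)
  also have "\<dots> = (\<Sum>k\<le>K. A (q ^ k)) * sum A (r ` X)"
    by (simp add: sum_product sum.cartesian_product)
  also have "\<dots> \<le> B q * prod B Q"
  proof (rule mult_mono)
    show "(\<Sum>k\<le>K. A (q ^ k)) \<le> B q" using insert.prems by simp
    show "sum A (r ` X) \<le> prod B Q"
      using insert.prems r by (intro insert.IH) blast+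
    show "0 \<le> B q" using insert.prems(2)[of q 0] A by (simp add: multiplicative_def)
  qed (simp add: A sum_nonneg)
  also have "\<dots> = prod B (insert q Q)" using insert.hyps by simp
  finally show ?case .
qed

lemma multiplicative_summable_on:
  fixes A b :: "nat \<Rightarrow> real"
  assumes A: "multiplicative A" "\<And>n. A n \<ge> 0"
    and local_sum: "\<And>p K. prime p \<Longrightarrow> (\<Sum>k\<le>K. A (p ^ k)) \<le> 1 + b p"
    and b: "\<And>p. prime p \<Longrightarrow> b p \<ge> 0" "b summable_on {p. prime p}"
  shows "A summable_on {1..}"
proof (rule nonneg_bdd_above_summable_on)
  show "bdd_above (sum A ` {F. F \<subseteq> {1..} \<and> finite F})"
  proof (rule bdd_aboveI2)
    fix F :: "nat set" assume "F \<in> {F. F \<subseteq> {1..} \<and> finite F}"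
    then have F: "F \<subseteq> {1..}" "finite F" by auto
    define Q where "Q = (\<Union>n\<in>F. prime_factors n)"
    have Q: "finite Q" "\<And>q. q \<in> Q \<Longrightarrow> prime q" using F by (auto simp: Q_def)
    have "sum A F \<le> (\<Prod>p\<in>Q. 1 + b p)"
      using F by (intro multiplicative_sum_le_prod A Q local_sum) (auto simp: Q_def)
    also have "\<dots> \<le> exp (\<Sum>p\<in>Q. b p)"
      using Q b by (intro prod_le_exp_sum) auto
    also have "\<dots> \<le> exp (infsum b {p. prime p})"
      using Q b by (auto intro!: finite_sum_le_infsum)
    finally show "sum A F \<le> exp (infsum b {p. prime p})" .
  qed
qed (use A in simp)

lemma sum_norm_ratio_coeff_le:
  fixes x y :: "'a::real_normed_field"
  assumes y: "norm y \<le> 1" and r: "0 \<le> r" "r \<le> c" and c: "c < 1"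
  shows "(\<Sum>k\<le>K. norm (ratio_coeff x y k) * r ^ k) \<le> 1 + norm (y - x) * r / (1 - c)"
proof -
  have term_le: "norm (ratio_coeff x y (Suc k)) \<le> norm (y - x)" for k
    using y by (simp add: ratio_coeff_def norm_mult norm_power mult_left_le power_le_one)
  have "(\<Sum>k<K. r ^ k) \<le> 1 / (1 - r)"
    using r c by (simp add: sum_gp_strict divide_right_mono)
  also have "\<dots> \<le> 1 / (1 - c)"
    using r c by (intro divide_left_mono) auto
  finally have geom: "(\<Sum>k<K. r ^ k) \<le> 1 / (1 - c)" .
  have "(\<Sum>k\<le>K. norm (ratio_coeff x y k) * r ^ k) =
        1 + (\<Sum>k<K. norm (ratio_coeff x y (Suc k)) * r ^ Suc k)"
    by (subst sum.atMost_shift) (simp add: ratio_coeff_def)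
  also have "\<dots> \<le> 1 + (\<Sum>k<K. norm (y - x) * r * r ^ k)"
    using term_le r by (intro add_left_mono sum_mono) (simp add: mult.assoc mult_right_mono)
  also have "\<dots> = 1 + norm (y - x) * r * (\<Sum>k<K. r ^ k)"
    by (simp add: sum_distrib_left)
  also have "\<dots> \<le> 1 + norm (y - x) * r * (1 / (1 - c))"
    using geom r by (intro add_left_mono mult_left_mono) auto
  finally show ?thesis by simp
qed

lemma norm_divide_of_nat_powr:
  assumes "n > 0"
  shows "norm (z / of_nat n powr s) = norm z / real n powr Re s"
  using assms by (simp add: norm_divide norm_powr_real_powr)

lemma ratio_mult_abs_summable:
  fixes x y :: "nat \<Rightarrow> complex" and s :: complex
  assumes s: "Re s > 0" and y: "\<And>p. prime p \<Longrightarrow> norm (y p) \<le> 1"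
    and diff: "(\<lambda>p. norm (y p - x p) * real p powr - Re s) summable_on {p. prime p}"
  shows "(\<lambda>n. norm (ratio_mult x y n / of_nat n powr s)) summable_on {1..}"
proof -
  define A where "A n = norm (ratio_mult x y n) / real n powr Re s" for n
  define c where "c = (2::real) powr - Re s"
  have c: "0 \<le> c" "c < 1" using s by (auto simp: c_def powr_less_one)
  have "multiplicative A"
    using multiplicative_ratio_mult[of x y]
    by (auto simp: multiplicative_def A_def norm_mult powr_mult)
  moreover have "(\<Sum>k\<le>K. A (p ^ k)) \<le> 1 + norm (y p - x p) * real p powr - Re s / (1 - c)"
    if p: "prime p" for p K
  proof -
    have "(real p ^ k) powr Re s = (real p powr Re s) ^ k" for k
      by (induction k) (simp_all add: powr_mult)
    then have "A (p ^ k) = norm (ratio_coeff (x p) (y p) k) * (real p powr - Re s) ^ k" for k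
      using p by (simp add: A_def ratio_mult_prime_power powr_minus divide_inverse power_inverse)
    moreover have "real p powr - Re s \<le> c"
      using p s prime_ge_2_nat[OF p] unfolding c_def by (intro powr_mono2') auto
    ultimately show ?thesis
      using p c y by (simp add: sum_norm_ratio_coeff_le)
  qed
  moreover have "(\<lambda>p. norm (y p - x p) * real p powr - Re s / (1 - c)) summable_on {p. prime p}"
    using summable_on_cmult_left[OF diff, of "1 / (1 - c)"] by simp
  ultimately have "A summable_on {1..}"
    using c by (intro multiplicative_summable_on[of A]) (auto simp: A_def)
  then show ?thesis
    by (rule summable_on_cong[THEN iffD1, rotated]) (simp add: A_def norm_divide_of_nat_powr)
qed

lemma norm_diff_mult_powr_le:
  fixes z w :: complex and P \<beta> \<sigma> :: real
  assumes z: "norm z \<le> 1" and w: "norm w \<le> 1" and P: "P > 0"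
  shows "norm (w - z) * P powr - \<sigma> \<le> (1 - Re (z * cnj w)) / P powr \<beta> + P powr (\<beta> - 2 * \<sigma>)"
proof -
  define u where "u = norm (w - z)"
  define R where "R = 1 - Re (z * cnj w)"
  define a where "a = u * P powr (- \<beta> / 2)"
  define b where "b = P powr (\<beta> / 2 - \<sigma>)"
  have "Re z ^ 2 + Im z ^ 2 \<le> 1" "Re w ^ 2 + Im w ^ 2 \<le> 1"
    using z w by (metis cmod_power2 abs_norm_cancel norm_ge_zero power_le_one)+
  moreover have "u ^ 2 = (Re w - Re z) ^ 2 + (Im w - Im z) ^ 2"
    by (simp add: u_def cmod_power2)
  ultimately have u2: "u ^ 2 \<le> 2 * R"
    by (simp add: R_def power2_eq_square algebra_simps)
  have "a * b = u * P powr - \<sigma>"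
    by (simp add: a_def b_def mult.assoc flip: powr_add)
  moreover have "a ^ 2 = u ^ 2 / P powr \<beta>"
  proof -
    have "a ^ 2 = u ^ 2 * (P powr (- \<beta> / 2) * P powr (- \<beta> / 2))"
      by (simp add: a_def power2_eq_square algebra_simps)
    also have "P powr (- \<beta> / 2) * P powr (- \<beta> / 2) = P powr (- \<beta>)"
      by (simp flip: powr_add)
    finally show ?thesis by (simp add: powr_minus divide_inverse)
  qed
  moreover have "b ^ 2 = P powr (\<beta> - 2 * \<sigma>)"
    by (simp add: b_def power2_eq_square flip: powr_add)
  moreover have "2 * (a * b) \<le> a ^ 2 + b ^ 2"
    using sum_squares_bound[of a b] by (simp add: power2_eq_square)
  moreover have "u ^ 2 / P powr \<beta> \<le> 2 * (R / P powr \<beta>)"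
    using u2 P by (simp add: divide_right_mono)
  moreover have "b ^ 2 \<ge> 0" by simp
  ultimately show ?thesis unfolding u_def R_def by linarith
qed

lemma summable_on_norm_diff_powr:
  fixes f g :: "nat \<Rightarrow> complex" and \<beta> \<sigma> :: real
  assumes f: "\<And>n. n \<ge> 1 \<Longrightarrow> norm (f n) \<le> 1" and g: "\<And>n. n \<ge> 1 \<Longrightarrow> norm (g n) \<le> 1"
    and D: "dist_term \<beta> f g summable_on {p. prime p}" and \<sigma>: "\<sigma> > (1 + \<beta>) / 2"
  shows "(\<lambda>p. norm (g p - f p) * real p powr - \<sigma>) summable_on {p. prime p}"
proof (rule summable_on_comparison_test)
  have "summable (\<lambda>n. norm (real n powr (\<beta> - 2 * \<sigma>)))"
    using \<sigma> by (simp add: summable_real_powr_iff)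
  then have "(\<lambda>n. real n powr (\<beta> - 2 * \<sigma>)) summable_on UNIV"
    by (rule norm_summable_imp_summable_on)
  then have "(\<lambda>n. real n powr (\<beta> - 2 * \<sigma>)) summable_on {p. prime p}"
    by (rule summable_on_subset_banach) simp
  with D show "(\<lambda>p. dist_term \<beta> f g p + real p powr (\<beta> - 2 * \<sigma>)) summable_on {p. prime p}"
    by (rule summable_on_add)
  fix p :: nat assume "p \<in> {p. prime p}"
  then have "prime p" "p \<ge> 1" using prime_ge_1_nat by auto
  then show "norm (g p - f p) * real p powr - \<sigma> \<le> dist_term \<beta> f g p + real p powr (\<beta> - 2 * \<sigma>)"
    using norm_diff_mult_powr_le[OF f g, of p p "real p" \<sigma> \<beta>]
    by (simp add: dist_term_def prime_gt_0_nat)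
qed simp

lemma has_sum_product:
  fixes a b :: "_ \<Rightarrow> 'a::{banach, real_normed_div_algebra}"
  assumes a: "(\<lambda>x. norm (a x)) summable_on A" and b: "(\<lambda>y. norm (b y)) summable_on B"
  shows "((\<lambda>(x, y). a x * b y) has_sum (infsum a A * infsum b B)) (A \<times> B)"
proof -
  have "b summable_on B" using b by (rule abs_summable_summable)
  then have inner: "((\<lambda>y. a x * b y) has_sum a x * infsum b B) B" for x
    by (simp add: has_sum_cmult_right)
  have "a summable_on A" using a by (rule abs_summable_summable)
  then have outer: "((\<lambda>x. a x * infsum b B) has_sum infsum a A * infsum b B) A"
    by (simp add: has_sum_cmult_left)
  have "(\<lambda>(x, y). norm (a x) * norm (b y)) summable_on A \<times> B"
    using a b by (intro summable_on_SigmaI[where g = "\<lambda>x. norm (a x) * (\<Sum>\<^sub>\<infinity>y\<in>B. norm (b y))"])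
                 (auto intro: has_sum_cmult_right summable_on_cmult_left)
  then have "(\<lambda>z. norm ((\<lambda>(x, y). a x * b y) z)) summable_on A \<times> B"
    by (simp add: case_prod_unfold norm_mult)
  then have "(\<lambda>(x, y). a x * b y) summable_on A \<times> B"
    by (rule abs_summable_summable)
  from has_sum_SigmaI[OF _ outer this] inner show ?thesis by simp
qed

lemma has_sum_dirichlet_dconv:
  fixes a b :: "nat \<Rightarrow> complex" and s :: complex
  assumes a: "(\<lambda>n. norm (a n / of_nat n powr s)) summable_on {1..}"
    and b: "(\<lambda>n. norm (b n / of_nat n powr s)) summable_on {1..}"
  shows "((\<lambda>n. dconv a b n / of_nat n powr s) has_sum
           (\<Sum>\<^sub>\<infinity>n\<in>{1..}. a n / of_nat n powr s) * (\<Sum>\<^sub>\<infinity>n\<in>{1..}. b n / of_nat n powr s)) {1..}"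
proof -
  define a' b' where "a' = (\<lambda>n. a n / of_nat n powr s)" and "b' = (\<lambda>n. b n / of_nat n powr s)"
  let ?L = "infsum a' {1..} * infsum b' {1..}"
  have "((\<lambda>(d, e). a' d * b' e) has_sum ?L) ({1..} \<times> {1..})"
    using has_sum_product[OF a b] by (simp add: a'_def b'_def)
  also have "?this \<longleftrightarrow> ((\<lambda>(n, d). a' d * b' (n div d)) has_sum ?L) (SIGMA n:{1..}. {d. d dvd n})"
    by (rule has_sum_reindex_bij_witness[symmetric,
          where i = "\<lambda>(d, e). (d * e, d)" and j = "\<lambda>(n, d). (d, n div d)"])
       (auto elim!: dvdE simp: Suc_le_eq)
  finally have pairs: "((\<lambda>(n, d). a' d * b' (n div d)) has_sum ?L) (SIGMA n:{1..}. {d. d dvd n})" .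
  have "((\<lambda>d. a' d * b' (n div d)) has_sum dconv a b n / of_nat n powr s) {d. d dvd n}"
    if "n \<in> {1..}" for n
  proof -
    have "(\<Sum>d | d dvd n. a' d * b' (n div d)) =
          (\<Sum>d | d dvd n. a d * b (n div d) / of_nat n powr s)"
    proof (rule sum.cong)
      fix d assume "d \<in> {d. d dvd n}"
      then have "(of_nat n :: complex) = of_nat d * of_nat (n div d)"
        by (simp flip: of_nat_mult)
      then show "a' d * b' (n div d) = a d * b (n div d) / of_nat n powr s"
        by (simp add: a'_def b'_def powr_times_real)
    qed simp
    moreover have "finite {d. d dvd n}" using that by (simp add: finite_divisors_nat)
    ultimately show ?thesis
      by (simp add: dconv_def sum_divide_distrib has_sum_finite_iff)
  qed
  then have "((\<lambda>n. dconv a b n / of_nat n powr s) has_sum ?L) {1..}"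
    by (intro has_sum_SigmaD[OF pairs]) simp
  then show ?thesis by (simp add: a'_def b'_def)
qed

lemma ratio_mult_dirichlet_series_nonzero:
  fixes x y :: "nat \<Rightarrow> complex" and s :: complex
  assumes xy: "(\<lambda>n. norm (ratio_mult x y n / of_nat n powr s)) summable_on {1..}"
    and yx: "(\<lambda>n. norm (ratio_mult y x n / of_nat n powr s)) summable_on {1..}"
  shows "(\<Sum>\<^sub>\<infinity>n\<in>{1..}. ratio_mult x y n / of_nat n powr s) \<noteq> 0"
proof -
  have "((\<lambda>n. dconv (ratio_mult x y) (ratio_mult y x) n / of_nat n powr s) has_sum 1) {1..}"
  proof (rule has_sum_cong_neutral[THEN iffD1])
    show "((\<lambda>_. 1) has_sum (1::complex)) {1::nat}"
      using has_sum_finite[of "{1::nat}" "\<lambda>_. 1::complex"] by simp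
  qed (auto simp: dconv_ratio_mult_swap)
  with has_sum_dirichlet_dconv[OF xy yx] show ?thesis
    using has_sum_unique by fastforce
qed

lemma dist_term_commute: "dist_term \<beta> f g = dist_term \<beta> g f"
  by (simp add: dist_term_def fun_eq_iff mult.commute)

lemma ratio_mult_abs_summable_of_dist_term:
  fixes f g :: "nat \<Rightarrow> complex" and \<beta> :: real and s :: complex
  assumes f: "\<And>n. n \<ge> 1 \<Longrightarrow> norm (f n) \<le> 1" and g: "\<And>n. n \<ge> 1 \<Longrightarrow> norm (g n) \<le> 1"
    and D: "dist_term \<beta> f g summable_on {p. prime p}"
    and \<beta>: "\<beta> > 0" and s: "Re s > (1 + \<beta>) / 2"
  shows "(\<lambda>n. norm (ratio_mult f g n / of_nat n powr s)) summable_on {1..}"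
proof (rule ratio_mult_abs_summable)
  show "Re s > 0" using s \<beta> by (smt (verit) half_gt_zero)
  show "norm (g p) \<le> 1" if "prime p" for p
    using g prime_ge_1_nat[OF that] by blast
  show "(\<lambda>p. norm (g p - f p) * real p powr - Re s) summable_on {p. prime p}"
    by (rule summable_on_norm_diff_powr[OF f g D s])
qed

theorem lemma4:
  fixes f g h :: "nat \<Rightarrow> complex" and \<alpha> \<beta> :: real
  assumes f_cm: "completely_multiplicative f"
      and g_cm: "completely_multiplicative g"
      and f_bd: "\<And>n. n \<ge> 1 \<Longrightarrow> norm (f n) \<le> 1"
      and g_bd: "\<And>n. n \<ge> 1 \<Longrightarrow> norm (g n) \<le> 1"
      and S_f: "\<exists>\<xi> :: real \<Rightarrow> complex.
                  (\<forall>x\<ge>1. summatory f x = complex_of_real (x powr \<alpha>) * \<xi> x) \<and>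
                  (\<forall>\<epsilon>>0. \<exists>C. \<forall>t\<ge>1. norm (\<xi> t) \<le> C * t powr \<epsilon>)"
      and \<beta>_pos: "0 < \<beta>" and \<beta>_lt: "\<beta> < 2 * \<alpha> - 1"
      and D_fin: "dist_term \<beta> f g summable_on {p. prime p}"
      and h_def: "\<And>n. n \<ge> 1 \<Longrightarrow> g n = dconv f h n"
  shows "\<forall>s::complex. Re s > (1 + \<beta>) / 2 \<longrightarrow>
           ((\<lambda>n. h n / of_nat n powr s) summable_on {1..}) \<and>
           (\<Sum>\<^sub>\<infinity>n\<in>{1..}. h n / of_nat n powr s) \<noteq> 0"
proof (intro allI impI)
  fix s :: complex assume s: "Re s > (1 + \<beta>) / 2"
  have "f 1 = 1" using f_cm by (simp add: completely_multiplicative_def)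
  then have h: "h n = ratio_mult f g n" if "n \<in> {1..}" for n
  proof (rule dconv_left_cancel)
    show "dconv f h m = dconv f (ratio_mult f g) m" if "m > 0" for m
      using h_def[of m] dconv_ratio_mult[OF f_cm g_cm that] that by simp
  qed (use that in simp)
  have D_gf: "dist_term \<beta> g f summable_on {p. prime p}"
    using D_fin unfolding dist_term_commute[of \<beta> f g] .
  note abs_gf = ratio_mult_abs_summable_of_dist_term[OF g_bd f_bd D_gf \<beta>_pos s]
  note abs_fg = ratio_mult_abs_summable_of_dist_term[OF f_bd g_bd D_fin \<beta>_pos s]
  from abs_fg abs_gf have "(\<Sum>\<^sub>\<infinity>n\<in>{1..}. ratio_mult f g n / of_nat n powr s) \<noteq> 0"
    by (rule ratio_mult_dirichlet_series_nonzero)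
  moreover have "(\<lambda>n. ratio_mult f g n / of_nat n powr s) summable_on {1..}"
    using abs_fg by (rule abs_summable_summable)
  moreover have "(\<lambda>n. h n / of_nat n powr s) summable_on {1..} \<longleftrightarrow>
      (\<lambda>n. ratio_mult f g n / of_nat n powr s) summable_on {1..}"
    by (rule summable_on_cong) (simp add: h)
  moreover have "(\<Sum>\<^sub>\<infinity>n\<in>{1..}. h n / of_nat n powr s) =
      (\<Sum>\<^sub>\<infinity>n\<in>{1..}. ratio_mult f g n / of_nat n powr s)"
    by (rule infsum_cong) (simp add: h)
  ultimately show "((\<lambda>n. h n / of_nat n powr s) summable_on {1..}) \<and>
      (\<Sum>\<^sub>\<infinity>n\<in>{1..}. h n / of_nat n powr s) \<noteq> 0"
    by simp
qed

end
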